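(* Let $\Omega$ be a singular verification operator for $|\Psi\rangle$ (i.e. its smallest eigenvalue is $0$) with second largest eigenvalue $\beta$, let $N\ge1$ be an integer, $\delta^*=\frac{1+N\beta}{N+1}$, and $1/(N+1)\le\delta\le\delta^*$. Then $$F(N,\delta,\Omega)\le1-\frac{1}{(N+1)\delta}.$$
   Context: Let $\mathcal H$ be a Hilbert space of finite dimension $D\ge2$ and $|\Psi\rangle\in\mathcal H$ a unit vector. A verification operator for $|\Psi\rangle$ is a Hermitian operator $\Omega$ on $\mathcal H$ with $0\le\Omega\le1$, $\Omega|\Psi\rangle=|\Psi\rangle$, whose eigenvalue $1$ is nondegenerate. For a density operator $\rho$ on $\mathcal H^{\otimes(N+1)}$ put $p_\rho=\mathrm{tr}[(\Omega^{\otimes N}\otimes1)\rho]$, $f_\rho=\mathrm{tr}[(\Omega^{\otimes N}\otimes|\Psi\rangle\langle\Psi|)\rho]$, and $F(N,\delta,\Omega)=\min\{f_\rho/p_\rho:p_\rho\ge\delta\}$, the minimum over permutation-invariant density operators on $\mathcal H^{\otimes(N+1)}$. *)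

theory Defs
  imports Complex_Main "Jordan_Normal_Form.Char_Poly" "HOL-Combinatorics.Permutations"
begin

text \<open>The Hilbert space H is C^D (vectors/matrices of dimension D, Jordan_Normal_Form).
  Operators on the tensor power H^(n) are represented by their matrix entries with respect
  to the product basis, indexed by lists xs of length n with entries < D.\<close>

definition tuples :: "nat \<Rightarrow> nat \<Rightarrow> nat list set" where
  "tuples D n = {xs. length xs = n \<and> (\<forall>x\<in>set xs. x < D)}"

definition hermitian_mat :: "nat \<Rightarrow> complex mat \<Rightarrow> bool" where
  "hermitian_mat D A \<longleftrightarrow> A \<in> carrier_mat D D \<and>
     (\<forall>i<D. \<forall>j<D. A $$ (j, i) = cnj (A $$ (i, j)))"

definition psd_mat :: "nat \<Rightarrow> complex mat \<Rightarrow> bool" where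
  "psd_mat D A \<longleftrightarrow> hermitian_mat D A \<and>
     (\<forall>v \<in> carrier_vec D. 0 \<le> Re (\<Sum>i<D. \<Sum>j<D. cnj (v $ i) * A $$ (i, j) * v $ j))"

definition is_unit_state :: "nat \<Rightarrow> complex vec \<Rightarrow> bool" where
  "is_unit_state D \<Psi> \<longleftrightarrow> \<Psi> \<in> carrier_vec D \<and> (\<Sum>i<D. (cmod (\<Psi> $ i))\<^sup>2) = 1"

definition verification_operator :: "nat \<Rightarrow> complex mat \<Rightarrow> complex vec \<Rightarrow> bool" where
  "verification_operator D \<Omega> \<Psi> \<longleftrightarrow>
     hermitian_mat D \<Omega> \<and> psd_mat D \<Omega> \<and> psd_mat D (1\<^sub>m D - \<Omega>) \<and>
     \<Omega> *\<^sub>v \<Psi> = \<Psi> \<and>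
     (\<forall>v \<in> carrier_vec D. \<Omega> *\<^sub>v v = v \<longrightarrow> (\<exists>c. v = c \<cdot>\<^sub>v \<Psi>))"

definition density_op :: "nat \<Rightarrow> nat \<Rightarrow> (nat list \<Rightarrow> nat list \<Rightarrow> complex) \<Rightarrow> bool" where
  "density_op D n \<rho> \<longleftrightarrow>
     (\<forall>xs\<in>tuples D n. \<forall>ys\<in>tuples D n. \<rho> ys xs = cnj (\<rho> xs ys)) \<and>
     (\<forall>v :: nat list \<Rightarrow> complex. 0 \<le> Re (\<Sum>xs\<in>tuples D n. \<Sum>ys\<in>tuples D n.
         cnj (v xs) * \<rho> xs ys * v ys)) \<and>
     (\<Sum>xs\<in>tuples D n. \<rho> xs xs) = 1"

definition perm_invariant :: "nat \<Rightarrow> nat \<Rightarrow> (nat list \<Rightarrow> nat list \<Rightarrow> complex) \<Rightarrow> bool" where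
  "perm_invariant D n \<rho> \<longleftrightarrow>
     (\<forall>\<sigma>. \<sigma> permutes {..<n} \<longrightarrow>
        (\<forall>xs\<in>tuples D n. \<forall>ys\<in>tuples D n. \<rho> (permute_list \<sigma> xs) (permute_list \<sigma> ys) = \<rho> xs ys))"

text \<open>p_rho = tr[(Omega^(N) (x) 1) rho] on H^(N+1).\<close>
definition p_val :: "nat \<Rightarrow> nat \<Rightarrow> complex mat \<Rightarrow> (nat list \<Rightarrow> nat list \<Rightarrow> complex) \<Rightarrow> real" where
  "p_val D N \<Omega> \<rho> = Re (\<Sum>xs\<in>tuples D (N+1). \<Sum>ys\<in>tuples D (N+1).
      (\<Prod>i<N. \<Omega> $$ (xs ! i, ys ! i)) * (if xs ! N = ys ! N then 1 else 0) * \<rho> ys xs)"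

text \<open>f_rho = tr[(Omega^(N) (x) |Psi><Psi|) rho] on H^(N+1).\<close>
definition f_val :: "nat \<Rightarrow> nat \<Rightarrow> complex mat \<Rightarrow> complex vec \<Rightarrow> (nat list \<Rightarrow> nat list \<Rightarrow> complex) \<Rightarrow> real" where
  "f_val D N \<Omega> \<Psi> \<rho> = Re (\<Sum>xs\<in>tuples D (N+1). \<Sum>ys\<in>tuples D (N+1).
      (\<Prod>i<N. \<Omega> $$ (xs ! i, ys ! i)) * (\<Psi> $ (xs ! N) * cnj (\<Psi> $ (ys ! N))) * \<rho> ys xs)"

text \<open>F(N, delta, Omega): the minimum (taken as infimum) of f_rho / p_rho over permutation-invariant
  density operators with p_rho >= delta.\<close>
definition F_fid :: "nat \<Rightarrow> nat \<Rightarrow> real \<Rightarrow> complex mat \<Rightarrow> complex vec \<Rightarrow> real" where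
  "F_fid D N \<delta> \<Omega> \<Psi> = Inf {f_val D N \<Omega> \<Psi> \<rho> / p_val D N \<Omega> \<rho> | \<rho>.
      density_op D (N+1) \<rho> \<and> perm_invariant D (N+1) \<rho> \<and> p_val D N \<Omega> \<rho> \<ge> \<delta>}"

end

theory Submission
  imports Defs
begin

text \<open>
  Pick unit eigenvectors \<open>w\<^sub>0\<close>, \<open>w\<^sub>1\<close> of \<open>\<Omega>\<close> for the eigenvalues \<open>0\<close> and \<open>\<beta>\<close>; being
  eigenvectors for eigenvalues \<open>\<noteq> 1\<close> of a Hermitian operator, they are orthogonal to \<open>\<Psi>\<close>.
  For such a \<open>w\<close> with eigenvalue \<open>\<mu>\<close>, the permutation-invariant vector
  \<open>W = \<Sum>\<^sub>k \<Psi> \<otimes> \<dots> \<otimes> w \<otimes> \<dots> \<otimes> \<Psi>\<close> (with \<open>w\<close> in slot \<open>k\<close>) on \<open>N + 1\<close> factors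
  has norm \<open>N + 1\<close>, and only the diagonal terms survive in its expectation values:
  \<open>\<langle>W|\<Omega>\<^sup>\<otimes>\<^sup>N \<otimes> 1|W\<rangle> = N\<mu> + 1\<close> and \<open>\<langle>W|\<Omega>\<^sup>\<otimes>\<^sup>N \<otimes> |\<Psi>\<rangle>\<langle>\<Psi>||W\<rangle> = N\<mu>\<close>.
  A mixture \<open>c\<^sub>0 |W\<^sub>0\<rangle>\<langle>W\<^sub>0| + c\<^sub>1 |W\<^sub>1\<rangle>\<langle>W\<^sub>1|\<close> with \<open>(c\<^sub>0 + c\<^sub>1)(N + 1) = 1\<close> thus has
  \<open>p = 1/(N+1) + c\<^sub>1 N\<beta>\<close> and \<open>f = c\<^sub>1 N\<beta> = p - 1/(N+1)\<close>; the range of \<open>\<delta>\<close> is exactly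
  what allows \<open>p = \<delta>\<close>, giving \<open>f/p = 1 - 1/((N+1)\<delta>)\<close>. The infimum defining \<open>F\<close> is over
  a set bounded below because entries of density operators have modulus at most 1.
\<close>

lemma tuples_Suc: "tuples D (Suc n) = (\<lambda>(x, xs). x # xs) ` ({..<D} \<times> tuples D n)"
  unfolding tuples_def by (auto simp: length_Suc_conv image_iff)

lemma finite_tuples: "finite (tuples D n)"
proof -
  have "tuples D n = {xs. set xs \<subseteq> {..<D} \<and> length xs = n}"
    unfolding tuples_def by auto
  then show ?thesis
    using finite_lists_length_eq[of "{..<D}" n] by simp
qed

lemma length_tuples: "xs \<in> tuples D n \<Longrightarrow> length xs = n"
  by (simp add: tuples_def)

lemma sum_tuples_prod:
  "(\<Sum>xs\<in>tuples D n. \<Prod>i<n. h i (xs ! i)) = (\<Prod>i<n. \<Sum>x<D. (h i x :: 'a::comm_semiring_1))"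
proof (induction n arbitrary: h)
  case 0
  have "tuples D 0 = {[]}" by (auto simp: tuples_def)
  then show ?case by simp
next
  case (Suc n)
  have inj: "inj_on (\<lambda>(x, xs). x # xs) ({..<D} \<times> tuples D n)"
    by (auto simp: inj_on_def)
  have "(\<Sum>xs\<in>tuples D (Suc n). \<Prod>i<Suc n. h i (xs ! i))
      = (\<Sum>(x, xs)\<in>{..<D} \<times> tuples D n. h 0 x * (\<Prod>i<n. h (Suc i) (xs ! i)))"
    unfolding tuples_Suc sum.reindex[OF inj]
    by (simp add: case_prod_unfold prod.lessThan_Suc_shift del: prod.lessThan_Suc)
  also have "\<dots> = (\<Sum>x<D. h 0 x) * (\<Sum>xs\<in>tuples D n. \<Prod>i<n. h (Suc i) (xs ! i))"
    by (simp add: sum.cartesian_product sum_product)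
  also have "\<dots> = (\<Prod>i<Suc n. \<Sum>x<D. h i x)"
    using Suc[of "\<lambda>i. h (Suc i)"] by (simp add: prod.lessThan_Suc_shift del: prod.lessThan_Suc)
  finally show ?case .
qed

lemma sum_tuples_identity:
  "(\<Sum>xs\<in>tuples D n. \<Sum>ys\<in>tuples D n. cnj (u xs) * (\<Prod>i<n. if xs ! i = ys ! i then 1 else 0) * v ys)
    = (\<Sum>xs\<in>tuples D n. cnj (u xs) * v xs)"
proof (rule sum.cong[OF refl])
  fix xs assume xs: "xs \<in> tuples D n"
  have "(\<Prod>i<n. if xs ! i = ys ! i then 1 else 0 :: complex) = (if xs = ys then 1 else 0)"
    if "ys \<in> tuples D n" for ys
    using xs that by (auto simp: length_tuples intro: nth_equalityI)
  then have "(\<Sum>ys\<in>tuples D n. cnj (u xs) * (\<Prod>i<n. if xs ! i = ys ! i then 1 else 0) * v ys)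
      = (\<Sum>ys\<in>tuples D n. if xs = ys then cnj (u xs) * v ys else 0)"
    by (intro sum.cong) auto
  then show "(\<Sum>ys\<in>tuples D n. cnj (u xs) * (\<Prod>i<n. if xs ! i = ys ! i then 1 else 0) * v ys)
      = cnj (u xs) * v xs"
    using xs by (simp add: finite_tuples)
qed

definition braket :: "nat \<Rightarrow> (nat \<Rightarrow> complex) \<Rightarrow> (nat \<Rightarrow> complex) \<Rightarrow> complex" where
  "braket D u v = (\<Sum>x<D. cnj (u x) * v x)"

definition mat_elem :: "nat \<Rightarrow> (nat \<Rightarrow> complex) \<Rightarrow> (nat \<Rightarrow> nat \<Rightarrow> complex) \<Rightarrow> (nat \<Rightarrow> complex) \<Rightarrow> complex" where
  "mat_elem D u a v = (\<Sum>x<D. \<Sum>y<D. cnj (u x) * a x y * v y)"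

definition is_eigenfun :: "nat \<Rightarrow> (nat \<Rightarrow> nat \<Rightarrow> complex) \<Rightarrow> complex \<Rightarrow> (nat \<Rightarrow> complex) \<Rightarrow> bool" where
  "is_eigenfun D a \<mu> v \<longleftrightarrow> (\<forall>x<D. (\<Sum>y<D. a x y * v y) = \<mu> * v x)"

lemma braket_self: "braket D u u = of_real (\<Sum>x<D. (cmod (u x))\<^sup>2)"
  unfolding braket_def of_real_sum
  by (intro sum.cong refl) (simp only: complex_norm_square mult.commute)

lemma braket_commute: "braket D v u = cnj (braket D u v)"
  by (simp add: braket_def mult.commute)

lemma mat_elem_eigenfun:
  assumes "is_eigenfun D a \<mu> v"
  shows "mat_elem D u a v = \<mu> * braket D u v"
proof -
  have "mat_elem D u a v = (\<Sum>x<D. cnj (u x) * (\<Sum>y<D. a x y * v y))"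
    by (simp add: mat_elem_def sum_distrib_left mult.assoc)
  also have "\<dots> = (\<Sum>x<D. cnj (u x) * (\<mu> * v x))"
    using assms by (simp add: is_eigenfun_def)
  finally show ?thesis
    by (simp add: braket_def sum_distrib_left mult_ac)
qed

lemma is_eigenfun_id: "is_eigenfun D (\<lambda>x y. if x = y then 1 else 0) 1 v"
proof -
  have "(\<Sum>y<D. (if x = y then 1 else 0) * v y) = (\<Sum>y<D. if x = y then v y else 0)" for x
    by (rule sum.cong) auto
  then show ?thesis
    by (simp add: is_eigenfun_def)
qed

lemma mat_elem_ket_bra: "mat_elem D u (\<lambda>x y. p x * cnj (p y)) v = braket D u p * braket D p v"
  by (simp add: mat_elem_def braket_def sum_product mult_ac)

lemma mat_elem_hermitian:
  assumes "hermitian_mat D A"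
  shows "mat_elem D u (\<lambda>x y. A $$ (x, y)) v = cnj (mat_elem D v (\<lambda>x y. A $$ (x, y)) u)"
proof -
  have herm: "cnj (A $$ (y, x)) = A $$ (x, y)" if "x < D" "y < D" for x y
  proof -
    have "A $$ (y, x) = cnj (A $$ (x, y))"
      using assms that unfolding hermitian_mat_def by blast
    then show ?thesis
      by simp
  qed
  have "cnj (mat_elem D v (\<lambda>x y. A $$ (x, y)) u) = (\<Sum>y<D. \<Sum>x<D. cnj (u x) * A $$ (x, y) * v y)"
    unfolding mat_elem_def by (auto simp: herm mult_ac intro!: sum.cong)
  also have "\<dots> = mat_elem D u (\<lambda>x y. A $$ (x, y)) v"
    unfolding mat_elem_def by (rule sum.swap)
  finally show ?thesis
    by simp
qed

lemma eigenfun_orthogonal: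
  assumes "hermitian_mat D A"
    and \<psi>: "is_eigenfun D (\<lambda>x y. A $$ (x, y)) 1 \<psi>"
    and w: "is_eigenfun D (\<lambda>x y. A $$ (x, y)) (of_real \<mu>) w" and "\<mu> \<noteq> 1"
  shows "braket D w \<psi> = 0"
proof -
  have "braket D w \<psi> = mat_elem D w (\<lambda>x y. A $$ (x, y)) \<psi>"
    using mat_elem_eigenfun[OF \<psi>] by simp
  also have "\<dots> = of_real \<mu> * braket D w \<psi>"
    using mat_elem_hermitian[OF assms(1), of w \<psi>] mat_elem_eigenfun[OF w, of \<psi>]
    by (simp add: braket_commute[of D w])
  finally show ?thesis
    using \<open>\<mu> \<noteq> 1\<close> by (simp add: algebra_simps)
qed

lemma is_eigenfun_mult_vec:
  assumes "A \<in> carrier_mat D D" "v \<in> carrier_vec D" "A *\<^sub>v v = \<mu> \<cdot>\<^sub>v v"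
  shows "is_eigenfun D (\<lambda>x y. A $$ (x, y)) \<mu> (\<lambda>x. v $ x)"
proof -
  have "(\<Sum>y<D. A $$ (x, y) * v $ y) = \<mu> * v $ x" if "x < D" for x
  proof -
    have "(\<Sum>y<D. A $$ (x, y) * v $ y) = (A *\<^sub>v v) $ x"
      using assms(1,2) that by (simp add: scalar_prod_def atLeast0LessThan)
    also have "\<dots> = \<mu> * v $ x"
      using assms(2,3) that by simp
    finally show ?thesis .
  qed
  then show ?thesis
    by (simp add: is_eigenfun_def)
qed

lemma unit_eigenfun_exists:
  assumes A: "A \<in> carrier_mat D D" and "eigenvalue A \<mu>"
  obtains w where "is_eigenfun D (\<lambda>x y. A $$ (x, y)) \<mu> w" "braket D w w = 1"
proof -
  obtain v where v: "v \<in> carrier_vec D" "v \<noteq> 0\<^sub>v D" "A *\<^sub>v v = \<mu> \<cdot>\<^sub>v v"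
    using assms unfolding eigenvalue_def eigenvector_def by auto
  define s where "s = (\<Sum>x<D. (cmod (v $ x))\<^sup>2)"
  have "\<exists>x0<D. v $ x0 \<noteq> 0"
  proof (rule ccontr)
    assume "\<not> ?thesis"
    then have "v = 0\<^sub>v D"
      using v(1) by (intro eq_vecI) auto
    with v(2) show False ..
  qed
  then obtain x0 where "x0 < D" "v $ x0 \<noteq> 0"
    by blast
  then have "0 < (cmod (v $ x0))\<^sup>2" "(cmod (v $ x0))\<^sup>2 \<le> s"
    unfolding s_def by (auto intro: member_le_sum)
  then have s: "0 < s" by linarith
  define w where "w x = v $ x / of_real (sqrt s)" for x
  have "is_eigenfun D (\<lambda>x y. A $$ (x, y)) \<mu> w"
    using is_eigenfun_mult_vec[OF A v(1,3)]
    by (simp add: is_eigenfun_def w_def flip: sum_divide_distrib)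
  moreover have "braket D w w = 1"
  proof -
    have "(cmod (w x))\<^sup>2 = (cmod (v $ x))\<^sup>2 / s" for x
      using s by (simp add: w_def norm_divide power_divide)
    then have "(\<Sum>x<D. (cmod (w x))\<^sup>2) = s / s"
      by (simp add: s_def flip: sum_divide_distrib)
    then show ?thesis
      using s by (simp only: braket_self) simp
  qed
  ultimately show ?thesis using that by blast
qed

definition orth_unit_eigenfun :: "nat \<Rightarrow> complex mat \<Rightarrow> complex vec \<Rightarrow> real \<Rightarrow> (nat \<Rightarrow> complex) \<Rightarrow> bool" where
  "orth_unit_eigenfun D \<Omega> \<Psi> \<mu> w \<longleftrightarrow>
     is_eigenfun D (\<lambda>x y. \<Omega> $$ (x, y)) (of_real \<mu>) w \<and> braket D w w = 1 \<and> braket D w (\<lambda>x. \<Psi> $ x) = 0"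

lemma orth_unit_eigenfun_exists:
  assumes "hermitian_mat D \<Omega>" "is_eigenfun D (\<lambda>x y. \<Omega> $$ (x, y)) 1 (\<lambda>x. \<Psi> $ x)"
    and "eigenvalue \<Omega> (of_real \<mu>)" "\<mu> \<noteq> 1"
  obtains w where "orth_unit_eigenfun D \<Omega> \<Psi> \<mu> w"
proof -
  have "\<Omega> \<in> carrier_mat D D"
    using assms(1) by (simp add: hermitian_mat_def)
  then obtain w where "is_eigenfun D (\<lambda>x y. \<Omega> $$ (x, y)) (of_real \<mu>) w" "braket D w w = 1"
    using unit_eigenfun_exists assms(3) by blast
  with eigenfun_orthogonal[OF assms(1,2) _ assms(4)] show ?thesis
    using that unfolding orth_unit_eigenfun_def by blast
qed

lemma mat_elem_product:
  "(\<Sum>xs\<in>tuples D n. \<Sum>ys\<in>tuples D n.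
      cnj (\<Prod>i<n. u i (xs ! i)) * (\<Prod>i<n. a i (xs ! i) (ys ! i)) * (\<Prod>i<n. v i (ys ! i)))
    = (\<Prod>i<n. mat_elem D (u i) (a i) (v i))"
proof -
  have "(\<Sum>ys\<in>tuples D n.
      cnj (\<Prod>i<n. u i (xs ! i)) * (\<Prod>i<n. a i (xs ! i) (ys ! i)) * (\<Prod>i<n. v i (ys ! i)))
    = (\<Prod>i<n. \<Sum>y<D. cnj (u i (xs ! i)) * a i (xs ! i) y * v i y)" for xs
    by (simp flip: prod.distrib sum_tuples_prod)
  then show ?thesis
    by (simp add: mat_elem_def sum_distrib_left flip: sum_tuples_prod)
qed

definition single_excitation :: "nat \<Rightarrow> (nat \<Rightarrow> complex) \<Rightarrow> (nat \<Rightarrow> complex) \<Rightarrow> nat list \<Rightarrow> complex" where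
  "single_excitation n \<psi> w xs = (\<Sum>k<n. \<Prod>i<n. (if i = k then w else \<psi>) (xs ! i))"

lemma single_excitation_expectation:
  assumes off: "\<And>i. i < n \<Longrightarrow> mat_elem D w (a i) \<psi> = 0"
    and base: "\<And>i. i < n \<Longrightarrow> mat_elem D \<psi> (a i) \<psi> = 1"
  shows "(\<Sum>xs\<in>tuples D n. \<Sum>ys\<in>tuples D n. cnj (single_excitation n \<psi> w xs)
            * (\<Prod>i<n. a i (xs ! i) (ys ! i)) * single_excitation n \<psi> w ys)
    = (\<Sum>k<n. mat_elem D w (a k) w)"
proof -
  define g where "g k i = (if i = k then w else \<psi>)" for k i :: nat
  have "(\<Sum>xs\<in>tuples D n. \<Sum>ys\<in>tuples D n. cnj (single_excitation n \<psi> w xs)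
            * (\<Prod>i<n. a i (xs ! i) (ys ! i)) * single_excitation n \<psi> w ys)
    = (\<Sum>l<n. \<Sum>k<n. \<Sum>xs\<in>tuples D n. \<Sum>ys\<in>tuples D n. cnj (\<Prod>i<n. g k i (xs ! i))
            * (\<Prod>i<n. a i (xs ! i) (ys ! i)) * (\<Prod>i<n. g l i (ys ! i)))"
    by (simp add: single_excitation_def g_def sum_distrib_left sum_distrib_right
        sum.swap[of _ "tuples D n" "{..<n}"])
  also have "\<dots> = (\<Sum>l<n. \<Sum>k<n. \<Prod>i<n. mat_elem D (g k i) (a i) (g l i))"
    by (simp only: mat_elem_product)
  also have "\<dots> = (\<Sum>l<n. \<Prod>i<n. mat_elem D (g l i) (a i) (g l i))"
  proof (rule sum.cong[OF refl])
    fix l assume l: "l \<in> {..<n}"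
    \<comment> \<open>For \<open>k \<noteq> l\<close> the factor in slot \<open>k\<close> is \<open>\<langle>w|a\<^sub>k|\<psi>\<rangle> = 0\<close>.\<close>
    have "(\<Prod>i<n. mat_elem D (g k i) (a i) (g l i)) = 0" if "k \<in> {..<n}" "k \<noteq> l" for k
      using that off by (intro prod_zero bexI[of _ k]) (auto simp: g_def)
    then show "(\<Sum>k<n. \<Prod>i<n. mat_elem D (g k i) (a i) (g l i)) = (\<Prod>i<n. mat_elem D (g l i) (a i) (g l i))"
      using l by (simp add: sum.remove[of _ l] sum.neutral del: prod_zero_iff)
  qed
  also have "\<dots> = (\<Sum>k<n. mat_elem D w (a k) w)"
  proof (rule sum.cong[OF refl])
    fix k assume k: "k \<in> {..<n}"
    have "(\<Prod>i<n. mat_elem D (g k i) (a i) (g k i)) = (\<Prod>i<n. if i = k then mat_elem D w (a k) w else 1)"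
      using base by (intro prod.cong) (auto simp: g_def)
    then show "(\<Prod>i<n. mat_elem D (g k i) (a i) (g k i)) = mat_elem D w (a k) w"
      using k by simp
  qed
  finally show ?thesis .
qed

lemma single_excitation_norm:
  assumes "braket D \<psi> \<psi> = 1" "braket D w w = 1" "braket D w \<psi> = 0"
  shows "(\<Sum>xs\<in>tuples D n. cnj (single_excitation n \<psi> w xs) * single_excitation n \<psi> w xs) = of_nat n"
  using single_excitation_expectation[of n D w "\<lambda>_ x y. if x = y then 1 else 0" \<psi>] assms
  by (simp add: mat_elem_eigenfun[OF is_eigenfun_id] sum_tuples_identity)

lemma single_excitation_expectation_tensor_pow:
  assumes \<psi>: "is_eigenfun D a 1 \<psi>" and w: "is_eigenfun D a \<mu> w"
    and "braket D \<psi> \<psi> = 1" "braket D w w = 1" "braket D w \<psi> = 0"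
    and "mat_elem D w E \<psi> = 0" "mat_elem D \<psi> E \<psi> = 1"
  shows "(\<Sum>xs\<in>tuples D (Suc N). \<Sum>ys\<in>tuples D (Suc N).
            cnj (single_excitation (Suc N) \<psi> w xs)
            * ((\<Prod>i<N. a (xs ! i) (ys ! i)) * E (xs ! N) (ys ! N))
            * single_excitation (Suc N) \<psi> w ys)
    = of_nat N * \<mu> + mat_elem D w E w"
proof -
  define b where "b i = (if i < N then a else E)" for i
  have "(\<Prod>i<N. a (xs ! i) (ys ! i)) * E (xs ! N) (ys ! N) = (\<Prod>i<Suc N. b i (xs ! i) (ys ! i))"
    for xs ys :: "nat list"
    by (simp add: b_def)
  moreover have "(\<Sum>xs\<in>tuples D (Suc N). \<Sum>ys\<in>tuples D (Suc N). cnj (single_excitation (Suc N) \<psi> w xs)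
            * (\<Prod>i<Suc N. b i (xs ! i) (ys ! i)) * single_excitation (Suc N) \<psi> w ys)
      = (\<Sum>k<Suc N. mat_elem D w (b k) w)"
    using assms by (intro single_excitation_expectation) (simp_all add: b_def mat_elem_eigenfun)
  ultimately show ?thesis
    using mat_elem_eigenfun[OF w] assms by (simp add: b_def)
qed

lemma single_excitation_permute_list:
  assumes \<sigma>: "\<sigma> permutes {..<n}" and "length xs = n"
  shows "single_excitation n \<psi> w (permute_list \<sigma> xs) = single_excitation n \<psi> w xs"
proof -
  have bij: "bij_betw \<sigma> {..<n} {..<n}"
    using permutes_imp_bij[OF \<sigma>] .
  have "(\<Prod>i<n. (if i = k then w else \<psi>) (permute_list \<sigma> xs ! i))
      = (\<Prod>i<n. (if \<sigma> i = \<sigma> k then w else \<psi>) (xs ! \<sigma> i))" for k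
    using assms permutes_inj[OF \<sigma>] by (intro prod.cong refl) (auto simp: permute_list_nth inj_eq)
  also have "\<dots> k = (\<Prod>j<n. (if j = \<sigma> k then w else \<psi>) (xs ! j))" for k
    using prod.reindex_bij_betw[OF bij, of "\<lambda>j. (if j = \<sigma> k then w else \<psi>) (xs ! j)"] .
  finally show ?thesis
    unfolding single_excitation_def
    using sum.reindex_bij_betw[OF bij, of "\<lambda>k. \<Prod>j<n. (if j = k then w else \<psi>) (xs ! j)"] by simp
qed

lemma quadratic_form_two_point:
  fixes \<rho> :: "'a \<Rightarrow> 'a \<Rightarrow> complex" and u :: complex
  assumes "finite S" "x \<in> S" "y \<in> S"
  defines "v \<equiv> \<lambda>a. (if a = x then 1 else 0) - (if a = y then u else 0)"
  shows "(\<Sum>a\<in>S. \<Sum>b\<in>S. cnj (v a) * \<rho> a b * v b)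
    = \<rho> x x - \<rho> x y * u - cnj u * \<rho> y x + cnj u * u * \<rho> y y"
proof -
  have "(\<Sum>b\<in>S. \<rho> a b * v b)
      = (\<Sum>b\<in>S. (if b = x then \<rho> a b else 0) - (if b = y then \<rho> a b * u else 0))" for a
    unfolding v_def by (rule sum.cong) (auto simp: right_diff_distrib)
  then have "(\<Sum>a\<in>S. \<Sum>b\<in>S. cnj (v a) * \<rho> a b * v b) = (\<Sum>a\<in>S. cnj (v a) * (\<rho> a x - \<rho> a y * u))"
    using assms by (simp add: mult.assoc sum_subtractf flip: sum_distrib_left)
  also have "\<dots> = (\<Sum>a\<in>S. (if a = x then \<rho> a x - \<rho> a y * u else 0)
      - (if a = y then cnj u * (\<rho> a x - \<rho> a y * u) else 0))"
    unfolding v_def by (rule sum.cong) (auto simp: left_diff_distrib)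
  finally show ?thesis
    using assms by (simp add: sum_subtractf algebra_simps)
qed

lemma density_op_two_point_nonneg:
  assumes "density_op D n \<rho>" "xs \<in> tuples D n" "ys \<in> tuples D n"
  shows "0 \<le> Re (\<rho> xs xs - \<rho> xs ys * u - cnj u * \<rho> ys xs + cnj u * u * \<rho> ys ys)"
proof -
  have "0 \<le> Re (\<Sum>a\<in>tuples D n. \<Sum>b\<in>tuples D n. cnj (v a) * \<rho> a b * v b)" for v
    using assms(1) unfolding density_op_def by blast
  from this[of "\<lambda>a. (if a = xs then 1 else 0) - (if a = ys then u else 0)"] show ?thesis
    using quadratic_form_two_point[OF finite_tuples assms(2,3), where \<rho> = \<rho> and u = u] by (simp only:)
qed

lemma density_op_diag_bounds:
  assumes \<rho>: "density_op D n \<rho>" and xs: "xs \<in> tuples D n"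
  shows "0 \<le> Re (\<rho> xs xs)" "Re (\<rho> xs xs) \<le> 1"
proof -
  have nonneg: "0 \<le> Re (\<rho> ys ys)" if "ys \<in> tuples D n" for ys
    using density_op_two_point_nonneg[OF \<rho> that that, of 0] by simp
  then show "0 \<le> Re (\<rho> xs xs)"
    using xs .
  have trace: "(\<Sum>ys\<in>tuples D n. \<rho> ys ys) = 1"
    using \<rho> unfolding density_op_def by blast
  have "Re (\<rho> xs xs) \<le> (\<Sum>ys\<in>tuples D n. Re (\<rho> ys ys))"
    using xs nonneg by (intro member_le_sum) (auto simp: finite_tuples)
  also have "\<dots> = 1"
    using trace by (simp flip: Re_sum)
  finally show "Re (\<rho> xs xs) \<le> 1" .
qed

text \<open>Positivity on \<open>e\<^sub>x\<^sub>s - u e\<^sub>y\<^sub>s\<close>, with the phase \<open>u\<close> aligned to \<open>\<rho> xs ys\<close>,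
  gives \<open>2 |\<rho> xs ys| \<le> \<rho> xs xs + \<rho> ys ys\<close>.\<close>

lemma density_op_entry_bound:
  assumes \<rho>: "density_op D n \<rho>" and xs: "xs \<in> tuples D n" and ys: "ys \<in> tuples D n"
  shows "cmod (\<rho> xs ys) \<le> 1"
proof (cases "\<rho> xs ys = 0")
  case False
  define r where "r = cmod (\<rho> xs ys)"
  define u where "u = cnj (\<rho> xs ys) / of_real r"
  have r: "0 < r"
    using False by (simp add: r_def)
  have sq: "\<rho> xs ys * cnj (\<rho> xs ys) = of_real r * of_real r"
    using complex_norm_square[of "\<rho> xs ys"] by (simp add: r_def power2_eq_square)
  have "\<rho> ys xs = cnj (\<rho> xs ys)"
    using \<rho> xs ys unfolding density_op_def by blast
  then have phase: "\<rho> xs ys * u = of_real r" "cnj u * \<rho> ys xs = of_real r" "cnj u * u = 1"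
    using r by (simp_all add: u_def sq)
  have "2 * r \<le> Re (\<rho> xs xs) + Re (\<rho> ys ys)"
    using density_op_two_point_nonneg[OF \<rho> xs ys, of u] unfolding phase by simp
  then show ?thesis
    using density_op_diag_bounds[OF \<rho> xs] density_op_diag_bounds[OF \<rho> ys] by (simp add: r_def)
qed simp

lemma f_val_bounded: "\<exists>C. \<forall>\<rho>. density_op D (N + 1) \<rho> \<longrightarrow> \<bar>f_val D N \<Omega> \<Psi> \<rho>\<bar> \<le> C"
proof (intro exI allI impI)
  fix \<rho> assume \<rho>: "density_op D (N + 1) \<rho>"
  define c where "c xs ys = (\<Prod>i<N. \<Omega> $$ (xs ! i, ys ! i)) * (\<Psi> $ (xs ! N) * cnj (\<Psi> $ (ys ! N)))"
    for xs ys
  have "\<bar>f_val D N \<Omega> \<Psi> \<rho>\<bar> \<le> cmod (\<Sum>xs\<in>tuples D (N + 1). \<Sum>ys\<in>tuples D (N + 1). c xs ys * \<rho> ys xs)"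
    unfolding f_val_def c_def by (rule abs_Re_le_cmod)
  also have "\<dots> \<le> (\<Sum>xs\<in>tuples D (N + 1). \<Sum>ys\<in>tuples D (N + 1). cmod (c xs ys * \<rho> ys xs))"
    by (intro order.trans[OF norm_sum] sum_mono norm_sum)
  also have "\<dots> \<le> (\<Sum>xs\<in>tuples D (N + 1). \<Sum>ys\<in>tuples D (N + 1). cmod (c xs ys))"
    using density_op_entry_bound[OF \<rho>]
    by (intro sum_mono) (simp add: norm_mult mult_left_le)
  finally show "\<bar>f_val D N \<Omega> \<Psi> \<rho>\<bar> \<le> (\<Sum>xs\<in>tuples D (N + 1). \<Sum>ys\<in>tuples D (N + 1). cmod (c xs ys))" .
qed

lemma F_fid_le_ratio:
  assumes "density_op D (N + 1) \<rho>" "perm_invariant D (N + 1) \<rho>" "\<delta> \<le> p_val D N \<Omega> \<rho>" "0 < \<delta>"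
  shows "F_fid D N \<delta> \<Omega> \<Psi> \<le> f_val D N \<Omega> \<Psi> \<rho> / p_val D N \<Omega> \<rho>"
  unfolding F_fid_def
proof (rule cInf_lower)
  show "f_val D N \<Omega> \<Psi> \<rho> / p_val D N \<Omega> \<rho> \<in> {f_val D N \<Omega> \<Psi> \<rho> / p_val D N \<Omega> \<rho> | \<rho>.
      density_op D (N + 1) \<rho> \<and> perm_invariant D (N + 1) \<rho> \<and> \<delta> \<le> p_val D N \<Omega> \<rho>}"
    using assms by blast
  obtain C where C: "\<And>\<rho>. density_op D (N + 1) \<rho> \<Longrightarrow> \<bar>f_val D N \<Omega> \<Psi> \<rho>\<bar> \<le> C"
    using f_val_bounded by blast
  have "- C / \<delta> \<le> f_val D N \<Omega> \<Psi> \<sigma> / p_val D N \<Omega> \<sigma>"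
    if "density_op D (N + 1) \<sigma>" "\<delta> \<le> p_val D N \<Omega> \<sigma>" for \<sigma>
  proof -
    have "0 \<le> C" "- C \<le> f_val D N \<Omega> \<Psi> \<sigma>"
      using C[OF that(1)] by auto
    then have "- C / \<delta> \<le> - C / p_val D N \<Omega> \<sigma>"
      using that(2) \<open>0 < \<delta>\<close> by (simp add: frac_le)
    also have "\<dots> \<le> f_val D N \<Omega> \<Psi> \<sigma> / p_val D N \<Omega> \<sigma>"
      using \<open>- C \<le> f_val D N \<Omega> \<Psi> \<sigma>\<close> that(2) \<open>0 < \<delta>\<close> by (intro divide_right_mono) auto
    finally show ?thesis .
  qed
  then show "bdd_below {f_val D N \<Omega> \<Psi> \<rho> / p_val D N \<Omega> \<rho> | \<rho>.
      density_op D (N + 1) \<rho> \<and> perm_invariant D (N + 1) \<rho> \<and> \<delta> \<le> p_val D N \<Omega> \<rho>}"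
    by (auto intro!: bdd_belowI[of _ "- C / \<delta>"])
qed

definition ket_bra :: "(nat list \<Rightarrow> complex) \<Rightarrow> nat list \<Rightarrow> nat list \<Rightarrow> complex" where
  "ket_bra \<phi> xs ys = \<phi> xs * cnj (\<phi> ys)"

lemma p_val_single_excitation:
  assumes \<Psi>: "is_eigenfun D (\<lambda>x y. \<Omega> $$ (x, y)) 1 (\<lambda>x. \<Psi> $ x)" "braket D (\<lambda>x. \<Psi> $ x) (\<lambda>x. \<Psi> $ x) = 1"
    and w: "orth_unit_eigenfun D \<Omega> \<Psi> \<mu> w"
  shows "p_val D N \<Omega> (ket_bra (single_excitation (N + 1) (\<lambda>x. \<Psi> $ x) w)) = N * \<mu> + 1"
proof -
  define W where "W = single_excitation (Suc N) (\<lambda>x. \<Psi> $ x) w"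
  have w': "is_eigenfun D (\<lambda>x y. \<Omega> $$ (x, y)) (of_real \<mu>) w" "braket D w w = 1" "braket D w (\<lambda>x. \<Psi> $ x) = 0"
    using w unfolding orth_unit_eigenfun_def by auto
  have "(\<Sum>xs\<in>tuples D (Suc N). \<Sum>ys\<in>tuples D (Suc N).
          cnj (W xs) * ((\<Prod>i<N. \<Omega> $$ (xs ! i, ys ! i)) * (if xs ! N = ys ! N then 1 else 0)) * W ys)
      = of_nat N * of_real \<mu> + mat_elem D w (\<lambda>x y. if x = y then 1 else 0) w"
    unfolding W_def
    by (rule single_excitation_expectation_tensor_pow[OF \<Psi>(1) w'(1) \<Psi>(2) w'(2,3)])
      (simp_all add: mat_elem_eigenfun[OF is_eigenfun_id] \<Psi>(2) w'(3))
  then show ?thesis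
    by (simp add: p_val_def ket_bra_def W_def mat_elem_eigenfun[OF is_eigenfun_id] w'(2) mult_ac)
qed

lemma f_val_single_excitation:
  assumes \<Psi>: "is_eigenfun D (\<lambda>x y. \<Omega> $$ (x, y)) 1 (\<lambda>x. \<Psi> $ x)" "braket D (\<lambda>x. \<Psi> $ x) (\<lambda>x. \<Psi> $ x) = 1"
    and w: "orth_unit_eigenfun D \<Omega> \<Psi> \<mu> w"
  shows "f_val D N \<Omega> \<Psi> (ket_bra (single_excitation (N + 1) (\<lambda>x. \<Psi> $ x) w)) = N * \<mu>"
proof -
  define W where "W = single_excitation (Suc N) (\<lambda>x. \<Psi> $ x) w"
  have w': "is_eigenfun D (\<lambda>x y. \<Omega> $$ (x, y)) (of_real \<mu>) w" "braket D w w = 1" "braket D w (\<lambda>x. \<Psi> $ x) = 0"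
    using w unfolding orth_unit_eigenfun_def by auto
  have "(\<Sum>xs\<in>tuples D (Suc N). \<Sum>ys\<in>tuples D (Suc N).
          cnj (W xs) * ((\<Prod>i<N. \<Omega> $$ (xs ! i, ys ! i)) * (\<Psi> $ (xs ! N) * cnj (\<Psi> $ (ys ! N)))) * W ys)
      = of_nat N * of_real \<mu> + mat_elem D w (\<lambda>x y. \<Psi> $ x * cnj (\<Psi> $ y)) w"
    unfolding W_def
    by (rule single_excitation_expectation_tensor_pow[OF \<Psi>(1) w'(1) \<Psi>(2) w'(2,3)])
      (simp_all add: mat_elem_ket_bra \<Psi>(2) w'(3))
  then show ?thesis
    using braket_commute[of D "\<lambda>x. \<Psi> $ x" w]
    by (simp add: f_val_def ket_bra_def W_def mat_elem_ket_bra w'(3) mult_ac)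
qed

lemma p_val_mixture:
  "p_val D N \<Omega> (\<lambda>xs ys. of_real c0 * \<rho>0 xs ys + of_real c1 * \<rho>1 xs ys)
    = c0 * p_val D N \<Omega> \<rho>0 + c1 * p_val D N \<Omega> \<rho>1"
  unfolding p_val_def by (simp add: algebra_simps sum.distrib sum_distrib_left)

lemma f_val_mixture:
  "f_val D N \<Omega> \<Psi> (\<lambda>xs ys. of_real c0 * \<rho>0 xs ys + of_real c1 * \<rho>1 xs ys)
    = c0 * f_val D N \<Omega> \<Psi> \<rho>0 + c1 * f_val D N \<Omega> \<Psi> \<rho>1"
  unfolding f_val_def by (simp add: algebra_simps sum.distrib sum_distrib_left)

lemma density_op_mixture:
  assumes "0 \<le> c0" "0 \<le> c1"
    and "of_real c0 * (\<Sum>xs\<in>tuples D n. cnj (\<phi>0 xs) * \<phi>0 xs)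
       + of_real c1 * (\<Sum>xs\<in>tuples D n. cnj (\<phi>1 xs) * \<phi>1 xs) = 1"
  shows "density_op D n (\<lambda>xs ys. of_real c0 * ket_bra \<phi>0 xs ys + of_real c1 * ket_bra \<phi>1 xs ys)"
proof -
  have quadratic_form: "(\<Sum>xs\<in>tuples D n. \<Sum>ys\<in>tuples D n. cnj (v xs) * ket_bra \<phi> xs ys * v ys)
      = (\<Sum>xs\<in>tuples D n. cnj (v xs) * \<phi> xs) * cnj (\<Sum>xs\<in>tuples D n. cnj (v xs) * \<phi> xs)" for v \<phi>
    by (simp add: ket_bra_def sum_product mult_ac)
  show ?thesis
    unfolding density_op_def
  proof (intro conjI ballI allI)
    fix v :: "nat list \<Rightarrow> complex"
    have "(\<Sum>xs\<in>tuples D n. \<Sum>ys\<in>tuples D n.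
          cnj (v xs) * (of_real c0 * ket_bra \<phi>0 xs ys + of_real c1 * ket_bra \<phi>1 xs ys) * v ys)
        = of_real c0 * (\<Sum>xs\<in>tuples D n. \<Sum>ys\<in>tuples D n. cnj (v xs) * ket_bra \<phi>0 xs ys * v ys)
        + of_real c1 * (\<Sum>xs\<in>tuples D n. \<Sum>ys\<in>tuples D n. cnj (v xs) * ket_bra \<phi>1 xs ys * v ys)"
      by (simp add: algebra_simps sum.distrib sum_distrib_left)
    moreover have "0 \<le> Re (of_real c0 * (z0 * cnj z0) + of_real c1 * (z1 * cnj z1))" for z0 z1
      using assms(1,2) by simp
    ultimately show "0 \<le> Re (\<Sum>xs\<in>tuples D n. \<Sum>ys\<in>tuples D n.
        cnj (v xs) * (of_real c0 * ket_bra \<phi>0 xs ys + of_real c1 * ket_bra \<phi>1 xs ys) * v ys)"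
      by (simp only: quadratic_form)
  qed (use assms(3) in \<open>simp_all add: ket_bra_def sum.distrib sum_distrib_left mult_ac\<close>)
qed

lemma perm_invariant_mixture:
  assumes "\<And>\<sigma> xs. \<sigma> permutes {..<n} \<Longrightarrow> xs \<in> tuples D n \<Longrightarrow> \<phi>0 (permute_list \<sigma> xs) = \<phi>0 xs"
    and "\<And>\<sigma> xs. \<sigma> permutes {..<n} \<Longrightarrow> xs \<in> tuples D n \<Longrightarrow> \<phi>1 (permute_list \<sigma> xs) = \<phi>1 xs"
  shows "perm_invariant D n (\<lambda>xs ys. of_real c0 * ket_bra \<phi>0 xs ys + of_real c1 * ket_bra \<phi>1 xs ys)"
  using assms by (simp add: perm_invariant_def ket_bra_def)

lemma single_excitation_mixture:
  assumes \<Psi>: "is_eigenfun D (\<lambda>x y. \<Omega> $$ (x, y)) 1 (\<lambda>x. \<Psi> $ x)" "braket D (\<lambda>x. \<Psi> $ x) (\<lambda>x. \<Psi> $ x) = 1"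
    and w0: "orth_unit_eigenfun D \<Omega> \<Psi> \<mu>0 w0" and w1: "orth_unit_eigenfun D \<Omega> \<Psi> \<mu>1 w1"
    and c: "0 \<le> c0" "0 \<le> c1" "(c0 + c1) * (N + 1) = 1"
  defines "\<rho> \<equiv> \<lambda>xs ys. of_real c0 * ket_bra (single_excitation (N + 1) (\<lambda>x. \<Psi> $ x) w0) xs ys
                     + of_real c1 * ket_bra (single_excitation (N + 1) (\<lambda>x. \<Psi> $ x) w1) xs ys"
  shows "density_op D (N + 1) \<rho>" "perm_invariant D (N + 1) \<rho>"
    and "p_val D N \<Omega> \<rho> = c0 * (N * \<mu>0 + 1) + c1 * (N * \<mu>1 + 1)"
    and "f_val D N \<Omega> \<Psi> \<rho> = c0 * (N * \<mu>0) + c1 * (N * \<mu>1)"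
proof -
  note w0' = w0[unfolded orth_unit_eigenfun_def] and w1' = w1[unfolded orth_unit_eigenfun_def]
  have "(of_real ((c0 + c1) * (N + 1)) :: complex) = 1"
    by (simp only: c(3) of_real_1)
  then have "of_real c0 * of_nat (N + 1) + of_real c1 * of_nat (N + 1) = (1 :: complex)"
    by (simp add: algebra_simps)
  then show "density_op D (N + 1) \<rho>"
    unfolding \<rho>_def using c \<Psi>(2) w0' w1'
    by (intro density_op_mixture) (simp_all add: single_excitation_norm)
  show "perm_invariant D (N + 1) \<rho>"
    unfolding \<rho>_def
    by (intro perm_invariant_mixture) (simp_all add: single_excitation_permute_list length_tuples)
  show "p_val D N \<Omega> \<rho> = c0 * (N * \<mu>0 + 1) + c1 * (N * \<mu>1 + 1)"
    unfolding \<rho>_def p_val_mixture p_val_single_excitation[OF \<Psi> w0] p_val_single_excitation[OF \<Psi> w1] ..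
  show "f_val D N \<Omega> \<Psi> \<rho> = c0 * (N * \<mu>0) + c1 * (N * \<mu>1)"
    unfolding \<rho>_def f_val_mixture f_val_single_excitation[OF \<Psi> w0] f_val_single_excitation[OF \<Psi> w1] ..
qed

lemma single_excitation_witness:
  assumes \<Psi>: "is_eigenfun D (\<lambda>x y. \<Omega> $$ (x, y)) 1 (\<lambda>x. \<Psi> $ x)" "braket D (\<lambda>x. \<Psi> $ x) (\<lambda>x. \<Psi> $ x) = 1"
    and w0: "orth_unit_eigenfun D \<Omega> \<Psi> 0 w0" and w1: "orth_unit_eigenfun D \<Omega> \<Psi> \<beta> w1"
    and \<delta>: "1 / real (N + 1) \<le> \<delta>" "\<delta> \<le> (1 + real N * \<beta>) / real (N + 1)"
  obtains \<rho> where "density_op D (N + 1) \<rho>" "perm_invariant D (N + 1) \<rho>"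
    "p_val D N \<Omega> \<rho> = \<delta>" "f_val D N \<Omega> \<Psi> \<rho> = \<delta> - 1 / real (N + 1)"
proof -
  define m where "m = real N * \<beta>"
  define e where "e = \<delta> - 1 / real (N + 1)"
  have e: "0 \<le> e" "e \<le> m / real (N + 1)"
    using \<delta> by (simp_all add: e_def m_def add_divide_distrib)
  then have "0 \<le> m"
    by (auto simp: zero_le_divide_iff dest: order.trans)
  \<comment> \<open>If \<open>m = 0\<close> then \<open>e = 0\<close>, and division by zero yields the required weight \<open>c1 = 0\<close>.\<close>
  define c1 where "c1 = e / m"
  define c0 where "c0 = 1 / real (N + 1) - c1"
  have c1: "c1 * m = e \<and> 0 \<le> c1 \<and> c1 \<le> 1 / real (N + 1)"
  proof (cases "m = 0")
    case True
    then have "e = 0"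
      using e unfolding True by simp
    then show ?thesis
      unfolding c1_def True by simp
  next
    case False
    with \<open>0 \<le> m\<close> have "0 < m"
      by linarith
    have "c1 \<le> m / real (N + 1) / m"
      unfolding c1_def using e(2) \<open>0 < m\<close> by (intro divide_right_mono) auto
    then show ?thesis
      using \<open>0 < m\<close> e(1) by (simp add: c1_def)
  qed
  then have "0 \<le> c0" "0 \<le> c1" "(c0 + c1) * real (N + 1) = 1"
    by (simp_all add: c0_def)
  note mixture = single_excitation_mixture[OF \<Psi> w0 w1 this]
  have "c0 * (real N * 0 + 1) + c1 * (real N * \<beta> + 1) = (c0 + c1) + c1 * m"
    "c0 * (real N * 0) + c1 * (real N * \<beta>) = c1 * m"
    by (simp_all add: m_def algebra_simps)
  then have "c0 * (real N * 0 + 1) + c1 * (real N * \<beta> + 1) = \<delta>"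
    "c0 * (real N * 0) + c1 * (real N * \<beta>) = \<delta> - 1 / real (N + 1)"
    using c1 by (simp_all add: c0_def e_def)
  then show ?thesis
    by (rule that[OF mixture(1,2), unfolded mixture(3,4)])
qed

theorem lemma8:
  fixes D N :: nat and \<Omega> :: "complex mat" and \<Psi> :: "complex vec" and \<beta> \<delta> :: real
  assumes "D \<ge> 2"
    and "is_unit_state D \<Psi>"
    and "verification_operator D \<Omega> \<Psi>"
    and "eigenvalue \<Omega> 0"
    and "eigenvalue \<Omega> (complex_of_real \<beta>)" and "\<beta> \<noteq> 1"
    and "\<forall>\<mu>. eigenvalue \<Omega> \<mu> \<and> \<mu> \<noteq> 1 \<longrightarrow> Re \<mu> \<le> \<beta>"
    and "N \<ge> 1"
    and "1 / real (N + 1) \<le> \<delta>"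
    and "\<delta> \<le> (1 + real N * \<beta>) / real (N + 1)"
  shows "F_fid D N \<delta> \<Omega> \<Psi> \<le> 1 - 1 / (real (N + 1) * \<delta>)"
proof -
  have herm: "hermitian_mat D \<Omega>" and "\<Omega> *\<^sub>v \<Psi> = 1 \<cdot>\<^sub>v \<Psi>" and \<Psi>: "\<Psi> \<in> carrier_vec D"
    using assms(2,3) by (auto simp: verification_operator_def is_unit_state_def)
  then have \<Psi>_eigen: "is_eigenfun D (\<lambda>x y. \<Omega> $$ (x, y)) 1 (\<lambda>x. \<Psi> $ x)"
    by (intro is_eigenfun_mult_vec) (auto simp: hermitian_mat_def)
  have \<Psi>_unit: "braket D (\<lambda>x. \<Psi> $ x) (\<lambda>x. \<Psi> $ x) = 1"
    using assms(2) by (simp add: braket_self is_unit_state_def)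
  obtain w0 where "orth_unit_eigenfun D \<Omega> \<Psi> 0 w0"
    using orth_unit_eigenfun_exists[OF herm \<Psi>_eigen _ zero_neq_one] assms(4) by auto
  moreover obtain w1 where "orth_unit_eigenfun D \<Omega> \<Psi> \<beta> w1"
    using orth_unit_eigenfun_exists[OF herm \<Psi>_eigen assms(5,6)] .
  ultimately obtain \<rho> where \<rho>: "density_op D (N + 1) \<rho>" "perm_invariant D (N + 1) \<rho>"
    "p_val D N \<Omega> \<rho> = \<delta>" "f_val D N \<Omega> \<Psi> \<rho> = \<delta> - 1 / real (N + 1)"
    using single_excitation_witness[OF \<Psi>_eigen \<Psi>_unit _ _ assms(9,10)] by blast
  have "0 < 1 / real (N + 1)"
    by simp
  with assms(9) have "0 < \<delta>"
    by linarith
  then have "F_fid D N \<delta> \<Omega> \<Psi> \<le> (\<delta> - 1 / real (N + 1)) / \<delta>"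
    using F_fid_le_ratio[OF \<rho>(1,2), where \<delta> = \<delta> and \<Omega> = \<Omega> and \<Psi> = \<Psi>] \<rho>(3,4) by simp
  also have "\<dots> = 1 - 1 / (real (N + 1) * \<delta>)"
    using \<open>0 < \<delta>\<close> by (simp add: diff_divide_distrib divide_divide_eq_left mult.commute)
  finally show ?thesis .
qed

end
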